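(* Let $a_i:\mathbb{R}^n\to\mathbb{R}$ be convex and $L_a$-smooth, and suppose there exist $C_0>0$, $C_1\ge0$ with $\|\nabla a_i(x)\|_2^2\le C_0+C_1|a_i(x)|$ for all $x\in\mathbb{R}^n$. Then for every $\delta>0$, the function $x\mapsto p_\delta(a_i(x))$ is $\left(L_a+\frac{C_1}{4}+\frac{C_0}{4\delta}\right)$-smooth, i.e., its gradient is Lipschitz with this constant in the Euclidean norm.
   Context: $p_\delta(t)=\delta\log(1+\exp(t/\delta))$ is the softplus function with parameter $\delta>0$. A function is $L$-smooth if its gradient is $L$-Lipschitz w.r.t. $\|\cdot\|_2$. *)

theory Defs
  imports "HOL-Analysis.Analysis"
begin

definition softplus :: "real \<Rightarrow> real \<Rightarrow> real" where
  "softplus \<delta> t = \<delta> * ln (1 + exp (t / \<delta>))"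

definition L_smooth :: "('a::real_inner \<Rightarrow> real) \<Rightarrow> real \<Rightarrow> bool" where
  "L_smooth f L \<longleftrightarrow> (\<exists>g. (\<forall>x. (f has_derivative (\<lambda>h. g x \<bullet> h)) (at x)) \<and>
                          (\<forall>x y. norm (g x - g y) \<le> L * norm (x - y)))"

end

theory Submission
  imports Defs
begin

(* The gradient of softplus(a x) is sigmoid(a x) * grad a(x) with 0 <= sigmoid <= 1.  Near a
   point u its increment is at most (L_a + sigmoid'(a u) |grad a(u)|^2) |v - u| + o(|v - u|),
   and sigmoid'(t) (C0 + C1 |t|) <= C0 / (4 delta) + C1 / 4 since s (1 - s) <= 1/4 and
   |z| e^z / (1 + e^z)^2 <= 1/4, i.e. 2|z| <= 1 + cosh z.  A local Lipschitz bound valid at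
   every point propagates along segments to a global one. *)

lemma exp_ge_Taylor_cubic: "1 + x + x\<^sup>2 / 2 + x ^ 3 / 6 \<le> exp (x::real)"
proof -
  obtain t where "exp x = (\<Sum>m<4. x ^ m / fact m) + exp t / fact 4 * x ^ 4"
    using Maclaurin_exp_le[of x 4] by blast
  moreover have "(\<Sum>m<4. x ^ m / fact m) = 1 + x + x\<^sup>2 / 2 + x ^ 3 / 6"
    by (simp add: eval_nat_numeral fact_numeral)
  moreover have "0 \<le> exp t / fact 4 * x ^ 4"
    by simp
  ultimately show ?thesis
    by linarith
qed

lemma cosh_ge_one_plus_half_square: "1 + x\<^sup>2 / 2 \<le> cosh (x::real)"
  using exp_ge_Taylor_cubic[of x] exp_ge_Taylor_cubic[of "-x"]
  by (simp add: cosh_field_def power3_eq_cube)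

lemma four_abs_mult_exp_le: "4 * \<bar>x\<bar> * exp x \<le> (1 + exp (x::real))\<^sup>2"
proof -
  have "(1 + exp x)\<^sup>2 = exp x * (2 + 2 * cosh x)"
    by (simp add: cosh_field_def power2_eq_square field_simps exp_minus)
  moreover have "4 * \<bar>x\<bar> \<le> 2 + 2 * cosh x"
    using cosh_ge_one_plus_half_square[of x] zero_le_power2[of "\<bar>x\<bar> - 2"]
    by (simp add: power2_eq_square algebra_simps)
  ultimately show ?thesis
    by simp
qed

lemma one_plus_exp_pos: "0 < 1 + exp (x::real)"
  by (metis add_pos_pos exp_gt_zero zero_less_one)

definition sigmoid :: "real \<Rightarrow> real \<Rightarrow> real" where
  "sigmoid \<delta> t = exp (t / \<delta>) / (1 + exp (t / \<delta>))"

lemma sigmoid_nonneg: "0 \<le> sigmoid \<delta> t"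
  by (simp add: sigmoid_def add_pos_pos less_imp_le)

lemma abs_sigmoid_le_1: "\<bar>sigmoid \<delta> t\<bar> \<le> 1"
  by (simp add: sigmoid_def add_pos_pos)

lemma sigmoid_mult_one_minus: "sigmoid \<delta> t * (1 - sigmoid \<delta> t) = exp (t / \<delta>) / (1 + exp (t / \<delta>))\<^sup>2"
  using one_plus_exp_pos[of "t / \<delta>"]
  by (simp add: sigmoid_def power2_eq_square field_simps)

lemma DERIV_softplus:
  assumes "\<delta> \<noteq> 0"
  shows "(softplus \<delta> has_real_derivative sigmoid \<delta> t) (at t)"
  unfolding softplus_def[abs_def]
  using assms one_plus_exp_pos[of "t / \<delta>"]
  by (auto intro!: derivative_eq_intros simp: sigmoid_def)

lemma DERIV_sigmoid:
  assumes "\<delta> \<noteq> 0"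
  shows "(sigmoid \<delta> has_real_derivative sigmoid \<delta> t * (1 - sigmoid \<delta> t) / \<delta>) (at t)"
  unfolding sigmoid_mult_one_minus unfolding sigmoid_def[abs_def]
  using assms one_plus_exp_pos[of "t / \<delta>"]
  by (auto intro!: derivative_eq_intros simp: power2_eq_square field_simps)

lemma sigmoid_deriv_weighted_le:
  assumes \<delta>: "\<delta> > 0" and "C0 \<ge> 0" and "C1 \<ge> 0"
  shows "\<bar>sigmoid \<delta> t * (1 - sigmoid \<delta> t) / \<delta>\<bar> * (C0 + C1 * \<bar>t\<bar>) \<le> C0 / (4 * \<delta>) + C1 / 4"
proof -
  define q where "q = sigmoid \<delta> t * (1 - sigmoid \<delta> t)"
  have q_nonneg: "0 \<le> q"
    using sigmoid_nonneg[of \<delta> t] abs_sigmoid_le_1[of \<delta> t] by (simp add: q_def)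
  have q_le: "q \<le> 1 / 4"
    using zero_le_power2[of "2 * sigmoid \<delta> t - 1"] by (simp add: q_def power2_eq_square algebra_simps)
  have abs_q_le: "\<bar>t / \<delta>\<bar> * q \<le> 1 / 4"
  proof -
    define z where "z = t / \<delta>"
    have "4 * \<bar>z\<bar> * exp z \<le> (1 + exp z)\<^sup>2" and "0 < (1 + exp z)\<^sup>2"
      using four_abs_mult_exp_le one_plus_exp_pos[of z] by auto
    then have "\<bar>z\<bar> * (exp z / (1 + exp z)\<^sup>2) \<le> 1 / 4"
      by (simp add: pos_divide_le_eq)
    then show ?thesis
      by (simp add: q_def sigmoid_mult_one_minus z_def)
  qed
  have "\<bar>q / \<delta>\<bar> * (C0 + C1 * \<bar>t\<bar>) = C0 / \<delta> * q + C1 * (\<bar>t / \<delta>\<bar> * q)"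
    using \<delta> q_nonneg by (simp add: field_simps)
  also have "\<dots> \<le> C0 / \<delta> * (1 / 4) + C1 * (1 / 4)"
    using q_le abs_q_le assms by (intro add_mono mult_left_mono) auto
  finally show ?thesis
    by (simp add: q_def)
qed

lemma L_smooth_imp_gradient_lipschitz:
  fixes f :: "'a::real_inner \<Rightarrow> real"
  assumes "L_smooth f L" and grad: "\<And>x. (f has_derivative (\<lambda>h. g x \<bullet> h)) (at x)"
  shows "norm (g x - g y) \<le> L * norm (x - y)"
proof -
  obtain g' where grad': "\<And>x. (f has_derivative (\<lambda>h. g' x \<bullet> h)) (at x)"
    and lip: "\<And>x y. norm (g' x - g' y) \<le> L * norm (x - y)"
    using assms(1) unfolding L_smooth_def by blast
  have "g' x = g x" for x
  proof -
    have "(\<lambda>h. g' x \<bullet> h) = (\<lambda>h. g x \<bullet> h)"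
      using has_derivative_unique[OF grad' grad] .
    then have "(g' x - g x) \<bullet> (g' x - g x) = 0"
      by (metis inner_diff_left right_minus_eq)
    then show ?thesis
      by simp
  qed
  then show ?thesis
    using lip by metis
qed

lemma chain_gradient_local_lipschitz:
  fixes f :: "'a::real_inner \<Rightarrow> real" and G :: "'a \<Rightarrow> 'a" and \<phi> :: "real \<Rightarrow> real"
  assumes f: "(f has_derivative (\<lambda>h. G u \<bullet> h)) (at u)"
    and \<phi>: "(\<phi> has_real_derivative \<phi>') (at (f u))"
    and \<phi>_bound: "\<And>t. \<bar>\<phi> t\<bar> \<le> 1"
    and G: "\<And>x y. norm (G x - G y) \<le> L * norm (x - y)"
    and \<epsilon>: "\<epsilon> > 0"
  shows "\<exists>d>0. \<forall>v. norm (v - u) < d \<longrightarrow>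
           norm (\<phi> (f v) *\<^sub>R G v - \<phi> (f u) *\<^sub>R G u)
             \<le> (L + \<bar>\<phi>'\<bar> * (norm (G u))\<^sup>2 + \<epsilon>) * norm (v - u)"
proof -
  define e where "e = \<epsilon> / (norm (G u) + 1)"
  have G_pos: "norm (G u) + 1 > 0"
    by (simp add: add_nonneg_pos)
  then have e: "e > 0"
    using \<epsilon> by (simp add: e_def)
  have "e * norm (G u) \<le> e * (norm (G u) + 1)"
    using e by simp
  also have "\<dots> = \<epsilon>"
    using G_pos by (simp add: e_def)
  finally have e_G: "e * norm (G u) \<le> \<epsilon>" .
  have "((\<lambda>x. \<phi> (f x)) has_derivative (\<lambda>h. (G u \<bullet> h) * \<phi>')) (at u)"
    by (rule DERIV_compose_FDERIV[OF \<phi> f])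
  then obtain d where d: "d > 0" and taylor: "\<And>v. norm (v - u) < d \<Longrightarrow>
      \<bar>\<phi> (f v) - \<phi> (f u) - (G u \<bullet> (v - u)) * \<phi>'\<bar> \<le> e * norm (v - u)"
    using e unfolding has_derivative_at_alt by fastforce
  have "norm (\<phi> (f v) *\<^sub>R G v - \<phi> (f u) *\<^sub>R G u)
          \<le> (L + \<bar>\<phi>'\<bar> * (norm (G u))\<^sup>2 + \<epsilon>) * norm (v - u)"
    if v: "norm (v - u) < d" for v
  proof -
    define n where "n = norm (v - u)"
    have n: "n \<ge> 0"
      by (simp add: n_def)
    have "\<bar>\<phi> (f v) - \<phi> (f u)\<bar> \<le> \<bar>G u \<bullet> (v - u)\<bar> * \<bar>\<phi>'\<bar> + e * n"
      using taylor[OF v] unfolding n_def abs_mult[symmetric] by linarith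
    also have "\<dots> \<le> norm (G u) * n * \<bar>\<phi>'\<bar> + e * n"
      unfolding n_def by (intro add_mono mult_right_mono Cauchy_Schwarz_ineq2) auto
    finally have \<phi>_diff: "\<bar>\<phi> (f v) - \<phi> (f u)\<bar> \<le> norm (G u) * n * \<bar>\<phi>'\<bar> + e * n" .
    have "\<phi> (f v) *\<^sub>R G v - \<phi> (f u) *\<^sub>R G u = \<phi> (f v) *\<^sub>R (G v - G u) + (\<phi> (f v) - \<phi> (f u)) *\<^sub>R G u"
      by (simp add: algebra_simps)
    then have "norm (\<phi> (f v) *\<^sub>R G v - \<phi> (f u) *\<^sub>R G u)
        \<le> \<bar>\<phi> (f v)\<bar> * norm (G v - G u) + \<bar>\<phi> (f v) - \<phi> (f u)\<bar> * norm (G u)"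
      by (metis norm_scaleR norm_triangle_ineq)
    also have "\<dots> \<le> 1 * (L * n) + (norm (G u) * n * \<bar>\<phi>'\<bar> + e * n) * norm (G u)"
      using \<phi>_bound G[of v u] \<phi>_diff unfolding n_def
      by (intro add_mono mult_mono mult_right_mono) auto
    also have "\<dots> = (L + \<bar>\<phi>'\<bar> * (norm (G u))\<^sup>2 + e * norm (G u)) * n"
      by (simp add: algebra_simps power2_eq_square)
    also have "\<dots> \<le> (L + \<bar>\<phi>'\<bar> * (norm (G u))\<^sup>2 + \<epsilon>) * n"
      using e_G n by (intro mult_right_mono) auto
    finally show ?thesis
      by (simp add: n_def)
  qed
  with d show ?thesis
    by blast
qed

lemma lipschitz_bound_if_local_bound:
  fixes f :: "'a::real_normed_vector \<Rightarrow> 'b::real_normed_vector"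
  assumes local: "\<And>u \<epsilon>. \<epsilon> > 0 \<Longrightarrow>
      \<exists>d>0. \<forall>v. norm (v - u) < d \<longrightarrow> norm (f v - f u) \<le> (M + \<epsilon>) * norm (v - u)"
  shows "norm (f x - f y) \<le> M * norm (x - y)"
proof (cases "x = y")
  case False
  define N where "N = norm (x - y)"
  have N: "N > 0"
    using False by (simp add: N_def)
  have "isCont f u" for u
  proof -
    obtain d where "d > 0" and d: "\<forall>v. norm (v - u) < d \<longrightarrow> norm (f v - f u) \<le> (M + 1) * norm (v - u)"
      using local[of 1] by auto
    then have "\<forall>\<^sub>F v in at u. norm (f v - f u) \<le> (M + 1) * norm (v - u)"
      by (auto simp: eventually_at dist_norm)
    moreover have "((\<lambda>v. (M + 1) * norm (v - u)) \<longlongrightarrow> 0) (at u)"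
      by (auto intro!: tendsto_eq_intros simp: LIM_zero_iff)
    ultimately show ?thesis
      unfolding isCont_def by (subst Lim_null) (rule Lim_null_comparison)
  qed
  then have cont: "continuous_on UNIV f"
    by (simp add: continuous_at_imp_continuous_on)
  define \<gamma> where "\<gamma> t = f (y + t *\<^sub>R (x - y))" for t
  have "norm (f x - f y) \<le> M * N + e" if e: "e > 0" for e
  proof -
    define \<epsilon> where "\<epsilon> = e / N"
    have \<epsilon>: "\<epsilon> > 0"
      using e N by (simp add: \<epsilon>_def)
    have "dist (\<gamma> 1) (\<gamma> 0) \<le> (M + \<epsilon>) * N * (1 - 0)"
    proof (rule locally_lipschitz_imp_lipschitz_aux)
      show "continuous_on {0..1} \<gamma>"
        unfolding \<gamma>_def
        by (rule continuous_on_compose2[OF cont]) (intro continuous_intros, simp)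
    next
      fix t assume t: "t \<in> {0..<1::real}"
      obtain d where d: "d > 0" and bound: "\<forall>v. norm (v - (y + t *\<^sub>R (x - y))) < d \<longrightarrow>
          norm (f v - f (y + t *\<^sub>R (x - y))) \<le> (M + \<epsilon>) * norm (v - (y + t *\<^sub>R (x - y)))"
        using local[OF \<epsilon>] by blast
      define s where "s = t + min (d / (2 * N)) (1 - t)"
      have s: "t < s" "s \<le> 1" "(s - t) * N < d"
        using t d N by (auto simp: s_def min_def field_simps)
      have "norm ((y + s *\<^sub>R (x - y)) - (y + t *\<^sub>R (x - y))) = (s - t) * N"
        using s by (simp add: N_def flip: scaleR_diff_left)
      then have "dist (\<gamma> s) (\<gamma> t) \<le> (M + \<epsilon>) * ((s - t) * N)"
        using bound s unfolding \<gamma>_def dist_norm by metis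
      with s show "\<exists>s\<in>{t<..1}. dist (\<gamma> s) (\<gamma> t) \<le> (M + \<epsilon>) * N * (s - t)"
        by (auto simp: mult_ac)
    qed simp
    moreover have "(M + \<epsilon>) * N = M * N + e"
      using N by (simp add: \<epsilon>_def algebra_simps)
    ultimately show ?thesis
      by (simp add: \<gamma>_def dist_norm)
  qed
  then show ?thesis
    unfolding N_def by (rule field_le_epsilon)
qed simp

lemma chain_gradient_lipschitz:
  fixes f :: "'a::real_inner \<Rightarrow> real" and G :: "'a \<Rightarrow> 'a" and \<phi> \<phi>' :: "real \<Rightarrow> real"
  assumes f: "\<And>x. (f has_derivative (\<lambda>h. G x \<bullet> h)) (at x)"
    and \<phi>: "\<And>t. (\<phi> has_real_derivative \<phi>' t) (at t)"
    and \<phi>_bound: "\<And>t. \<bar>\<phi> t\<bar> \<le> 1"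
    and G: "\<And>x y. norm (G x - G y) \<le> L * norm (x - y)"
    and curvature: "\<And>x. \<bar>\<phi>' (f x)\<bar> * (norm (G x))\<^sup>2 \<le> B"
  shows "norm (\<phi> (f x) *\<^sub>R G x - \<phi> (f y) *\<^sub>R G y) \<le> (L + B) * norm (x - y)"
proof (rule lipschitz_bound_if_local_bound)
  fix u and \<epsilon> :: real assume "\<epsilon> > 0"
  obtain d where "d > 0" and d: "\<And>v. norm (v - u) < d \<Longrightarrow>
      norm (\<phi> (f v) *\<^sub>R G v - \<phi> (f u) *\<^sub>R G u)
        \<le> (L + \<bar>\<phi>' (f u)\<bar> * (norm (G u))\<^sup>2 + \<epsilon>) * norm (v - u)"
    using chain_gradient_local_lipschitz[OF f \<phi> \<phi>_bound G \<open>\<epsilon> > 0\<close>] by blast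
  have "norm (\<phi> (f v) *\<^sub>R G v - \<phi> (f u) *\<^sub>R G u) \<le> (L + B + \<epsilon>) * norm (v - u)"
    if "norm (v - u) < d" for v
    using d[OF that] curvature[of u] mult_right_mono[of _ _ "norm (v - u)"]
    by (meson add_le_cancel_right add_le_cancel_left norm_ge_zero order_trans)
  with \<open>d > 0\<close> show "\<exists>d>0. \<forall>v. norm (v - u) < d \<longrightarrow>
      norm (\<phi> (f v) *\<^sub>R G v - \<phi> (f u) *\<^sub>R G u) \<le> (L + B + \<epsilon>) * norm (v - u)"
    by blast
qed

theorem proposition3:
  fixes a :: "'n::euclidean_space \<Rightarrow> real"
    and ga :: "'n \<Rightarrow> 'n"
    and La C0 C1 \<delta> :: real
  assumes conv: "convex_on UNIV a"
    and smooth: "L_smooth a La"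
    and grad: "\<And>x. (a has_derivative (\<lambda>h. ga x \<bullet> h)) (at x)"
    and C0: "C0 > 0" and C1: "C1 \<ge> 0"
    and bound: "\<And>x. (norm (ga x))\<^sup>2 \<le> C0 + C1 * \<bar>a x\<bar>"
    and \<delta>: "\<delta> > 0"
  shows "L_smooth (\<lambda>x. softplus \<delta> (a x)) (La + C1 / 4 + C0 / (4 * \<delta>))"
proof -
  have \<delta>_ne: "\<delta> \<noteq> 0"
    using \<delta> by simp
  define g where "g x = sigmoid \<delta> (a x) *\<^sub>R ga x" for x
  have "((\<lambda>x. softplus \<delta> (a x)) has_derivative (\<lambda>h. (ga x \<bullet> h) * sigmoid \<delta> (a x))) (at x)" for x
    by (rule DERIV_compose_FDERIV[OF DERIV_softplus[OF \<delta>_ne] grad])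
  then have "((\<lambda>x. softplus \<delta> (a x)) has_derivative (\<lambda>h. g x \<bullet> h)) (at x)" for x
    by (simp add: g_def mult.commute)
  moreover have "norm (g x - g y) \<le> (La + (C1 / 4 + C0 / (4 * \<delta>))) * norm (x - y)" for x y
    unfolding g_def
  proof (rule chain_gradient_lipschitz[OF grad DERIV_sigmoid[OF \<delta>_ne] abs_sigmoid_le_1])
    show "norm (ga x - ga y) \<le> La * norm (x - y)" for x y
      using L_smooth_imp_gradient_lipschitz[OF smooth grad] .
    fix u
    let ?\<sigma>' = "sigmoid \<delta> (a u) * (1 - sigmoid \<delta> (a u)) / \<delta>"
    have "\<bar>?\<sigma>'\<bar> * (norm (ga u))\<^sup>2 \<le> \<bar>?\<sigma>'\<bar> * (C0 + C1 * \<bar>a u\<bar>)"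
      using bound[of u] by (rule mult_left_mono) simp
    also have "\<dots> \<le> C0 / (4 * \<delta>) + C1 / 4"
      using C0 by (intro sigmoid_deriv_weighted_le \<delta> C1) simp
    finally show "\<bar>?\<sigma>'\<bar> * (norm (ga u))\<^sup>2 \<le> C1 / 4 + C0 / (4 * \<delta>)"
      by simp
  qed
  ultimately show ?thesis
    unfolding L_smooth_def add.assoc by blast
qed

end
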